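(* Let $\beta\in\mathbb{C}$ with $|\beta|=1$, $m\in\mathrm{Hol}(\mathbb{D})$, $m\not\equiv0$, $T:\mathrm{Hol}(\mathbb{D})\to\mathrm{Hol}(\mathbb{D})$ given by $(Tf)(z)=m(z)f(\beta z)$, and let $T_0$ be the restriction of $T$ to $\mathrm{Hol}_0(\mathbb{D})=\{f\in\mathrm{Hol}(\mathbb{D}):f(0)=0\}$. Then (a) $m(0)\in\sigma(T)$; (b) $\rho(T)\subset\rho(T_0)$; (c) $\rho(T_0)\subset\rho(T)\cup\{m(0)\}$.
   Context: $\mathbb{D}$ is the open unit disc, $\mathrm{Hol}(\mathbb{D})$ the space of holomorphic functions on $\mathbb{D}$. For a linear operator $S$ on a space $Y$, $\rho(S)$ is the set of $\lambda\in\mathbb{C}$ with $\lambda\mathrm{Id}-S$ bijective on $Y$ and $\sigma(S)=\mathbb{C}\setminus\rho(S)$. *)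

theory Defs
  imports "HOL-Complex_Analysis.Complex_Analysis"
begin

text \<open>Hol(D), represented extensionally: holomorphic functions on the unit disc,
  normalised to be 0 outside the disc, so that equality of elements is equality on D.\<close>
definition Hol :: "(complex \<Rightarrow> complex) set" where
  "Hol = {f. f holomorphic_on ball 0 1 \<and> (\<forall>z. z \<notin> ball 0 1 \<longrightarrow> f z = 0)}"

definition Hol0 :: "(complex \<Rightarrow> complex) set" where
  "Hol0 = {f \<in> Hol. f 0 = 0}"

definition wcomp :: "(complex \<Rightarrow> complex) \<Rightarrow> complex \<Rightarrow> (complex \<Rightarrow> complex) \<Rightarrow> (complex \<Rightarrow> complex)" where
  "wcomp m \<beta> f = (\<lambda>z. if z \<in> ball 0 1 then m z * f (\<beta> * z) else 0)"

definition resolvent_set :: "(('a \<Rightarrow> complex) \<Rightarrow> ('a \<Rightarrow> complex)) \<Rightarrow> ('a \<Rightarrow> complex) set \<Rightarrow> complex set" where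
  "resolvent_set S Y = {c. bij_betw (\<lambda>f. (\<lambda>z. c * f z - S f z)) Y Y}"

definition spectrum_op :: "(('a \<Rightarrow> complex) \<Rightarrow> ('a \<Rightarrow> complex)) \<Rightarrow> ('a \<Rightarrow> complex) set \<Rightarrow> complex set" where
  "spectrum_op S Y = - resolvent_set S Y"

end

theory Submission
  imports Defs
begin

text \<open>Evaluation at 0 intertwines T with multiplication by m(0): (T f)(0) = m(0) f(0), hence
  ((c - T) f)(0) = (c - m(0)) f(0). For c = m(0) the constant 1 is therefore not in the range
  of c - T. For c \<noteq> m(0), the hyperplane Hol0 is invariant under c - T and any preimage of
  a function vanishing at 0 vanishes at 0 itself, so bijectivity on Hol restricts to Hol0; conversely,
  Hol = Hol0 + \<complex>1 and (c - T) 1 has value c - m(0) \<noteq> 0 at 0, which lets us solve on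
  constants and on Hol0 separately.\<close>

locale point_evaluation_eigen =
  fixes S :: "('a \<Rightarrow> complex) \<Rightarrow> ('a \<Rightarrow> complex)"
    and Y :: "('a \<Rightarrow> complex) set"
    and p :: 'a and s0 :: complex and u :: "'a \<Rightarrow> complex"
  assumes add_closed: "f \<in> Y \<Longrightarrow> g \<in> Y \<Longrightarrow> (\<lambda>z. f z + g z) \<in> Y"
    and scale_closed: "f \<in> Y \<Longrightarrow> (\<lambda>z. a * f z) \<in> Y"
    and maps_into: "f \<in> Y \<Longrightarrow> S f \<in> Y"
    and additive: "f \<in> Y \<Longrightarrow> g \<in> Y \<Longrightarrow> S (\<lambda>z. f z + g z) = (\<lambda>z. S f z + S g z)"
    and homogeneous: "f \<in> Y \<Longrightarrow> S (\<lambda>z. a * f z) = (\<lambda>z. a * S f z)"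
    and eval_S: "f \<in> Y \<Longrightarrow> S f p = s0 * f p"
    and unit_in: "u \<in> Y"
    and unit_eval: "u p = 1"
begin

definition shift :: "complex \<Rightarrow> ('a \<Rightarrow> complex) \<Rightarrow> ('a \<Rightarrow> complex)" where
  "shift c f = (\<lambda>z. c * f z - S f z)"

lemma resolvent_set_iff: "c \<in> resolvent_set S X \<longleftrightarrow> bij_betw (shift c) X X"
  by (simp add: resolvent_set_def shift_def[abs_def])

lemma diff_closed: "f \<in> Y \<Longrightarrow> g \<in> Y \<Longrightarrow> (\<lambda>z. f z - g z) \<in> Y"
  using add_closed[of f "\<lambda>z. -1 * g z"] scale_closed[of g "-1"] by simp

lemma zero_in: "(\<lambda>z. 0) \<in> Y"
  using diff_closed[OF unit_in unit_in] by simp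

lemma shift_in: "f \<in> Y \<Longrightarrow> shift c f \<in> Y"
  unfolding shift_def by (intro diff_closed scale_closed maps_into)

lemma shift_eval: "f \<in> Y \<Longrightarrow> shift c f p = (c - s0) * f p"
  by (simp add: shift_def eval_S algebra_simps)

lemma shift_add: "f \<in> Y \<Longrightarrow> g \<in> Y \<Longrightarrow> shift c (\<lambda>z. f z + g z) = (\<lambda>z. shift c f z + shift c g z)"
  by (simp add: shift_def additive fun_eq_iff algebra_simps)

lemma shift_scale: "f \<in> Y \<Longrightarrow> shift c (\<lambda>z. a * f z) = (\<lambda>z. a * shift c f z)"
  by (simp add: shift_def homogeneous fun_eq_iff algebra_simps)

lemma shift_diff: "f \<in> Y \<Longrightarrow> g \<in> Y \<Longrightarrow> shift c (\<lambda>z. f z - g z) = (\<lambda>z. shift c f z - shift c g z)"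
  using shift_add[of f "\<lambda>z. -1 * g z" c] shift_scale[of g c "-1"] scale_closed[of g "-1"] by simp

lemma shift_zero: "shift c (\<lambda>z. 0) = (\<lambda>z. 0)"
  using shift_diff[OF unit_in unit_in] by simp

lemma eigenvalue_in_spectrum: "s0 \<notin> resolvent_set S Y"
proof
  assume "s0 \<in> resolvent_set S Y"
  then obtain f where "f \<in> Y" "shift s0 f = u"
    using unit_in by (metis bij_betw_imp_surj_on imageE resolvent_set_iff)
  then have "u p = 0" using shift_eval by force
  with unit_eval show False by simp
qed

lemma resolvent_set_subset_hyperplane:
  "resolvent_set S Y \<subseteq> resolvent_set S {f \<in> Y. f p = 0}"
proof
  fix c assume c: "c \<in> resolvent_set S Y"
  then have "c \<noteq> s0" using eigenvalue_in_spectrum by auto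
  from c have inj: "inj_on (shift c) Y" and surj: "shift c ` Y = Y"
    by (auto simp: resolvent_set_iff bij_betw_def)
  have "shift c ` {f \<in> Y. f p = 0} = {f \<in> Y. f p = 0}"
  proof
    show "shift c ` {f \<in> Y. f p = 0} \<subseteq> {f \<in> Y. f p = 0}"
      using shift_in shift_eval by auto
    show "{f \<in> Y. f p = 0} \<subseteq> shift c ` {f \<in> Y. f p = 0}"
    proof
      fix g assume g: "g \<in> {f \<in> Y. f p = 0}"
      then obtain f where f: "f \<in> Y" "g = shift c f" using surj by auto
      then have "(c - s0) * f p = 0" using g shift_eval by simp
      with \<open>c \<noteq> s0\<close> f show "g \<in> shift c ` {f \<in> Y. f p = 0}" by auto
    qed
  qed
  moreover have "inj_on (shift c) {f \<in> Y. f p = 0}"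
    using inj by (rule inj_on_subset) auto
  ultimately show "c \<in> resolvent_set S {f \<in> Y. f p = 0}"
    by (simp add: resolvent_set_iff bij_betw_def)
qed

lemma inj_on_shift_extend:
  assumes "c \<noteq> s0" and inj0: "inj_on (shift c) {f \<in> Y. f p = 0}"
  shows "inj_on (shift c) Y"
proof (rule inj_onI)
  fix f g assume f: "f \<in> Y" and g: "g \<in> Y" and eq: "shift c f = shift c g"
  define h where "h = (\<lambda>z. f z - g z)"
  have "h \<in> Y" unfolding h_def using f g by (rule diff_closed)
  have shift_h: "shift c h = (\<lambda>z. 0)"
    using shift_diff[OF f g, of c] eq by (simp add: h_def)
  have "(c - s0) * h p = 0"
    using shift_eval[OF \<open>h \<in> Y\<close>, of c] fun_cong[OF shift_h, of p] by simp
  with \<open>c \<noteq> s0\<close> have "h p = 0" by simp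
  have "h = (\<lambda>z. 0)"
  proof (rule inj_onD[OF inj0])
    show "shift c h = shift c (\<lambda>z. 0)" by (simp only: shift_h shift_zero)
    show "h \<in> {f \<in> Y. f p = 0}" using \<open>h \<in> Y\<close> \<open>h p = 0\<close> by simp
    show "(\<lambda>z. 0) \<in> {f \<in> Y. f p = 0}" using zero_in by simp
  qed
  then show "f = g" by (simp add: h_def fun_eq_iff)
qed

lemma shift_surj_extend:
  assumes "c \<noteq> s0" and surj0: "shift c ` {f \<in> Y. f p = 0} = {f \<in> Y. f p = 0}"
  shows "shift c ` Y = Y"
proof
  show "shift c ` Y \<subseteq> Y" using shift_in by auto
  show "Y \<subseteq> shift c ` Y"
  proof
    fix g assume g: "g \<in> Y"
    define a where "a = g p / (c - s0)"
    have au: "(\<lambda>z. a * u z) \<in> Y" using unit_in by (rule scale_closed)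
    have "(\<lambda>z. g z - shift c (\<lambda>z. a * u z) z) \<in> {f \<in> Y. f p = 0}"
      using diff_closed[OF g shift_in[OF au]] shift_eval[OF au] unit_eval \<open>c \<noteq> s0\<close>
      by (simp add: a_def)
    then obtain h where h: "h \<in> Y" "shift c h = (\<lambda>z. g z - shift c (\<lambda>z. a * u z) z)"
      using surj0 by (metis (no_types, lifting) imageE mem_Collect_eq)
    then have "shift c (\<lambda>z. h z + a * u z) = g"
      using shift_add[OF h(1) au] by (simp add: fun_eq_iff)
    then show "g \<in> shift c ` Y" using add_closed[OF h(1) au] by (metis imageI)
  qed
qed

lemma resolvent_set_hyperplane_subset:
  "resolvent_set S {f \<in> Y. f p = 0} \<subseteq> resolvent_set S Y \<union> {s0}"
proof
  fix c assume "c \<in> resolvent_set S {f \<in> Y. f p = 0}"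
  then have "inj_on (shift c) {f \<in> Y. f p = 0}" "shift c ` {f \<in> Y. f p = 0} = {f \<in> Y. f p = 0}"
    by (auto simp: resolvent_set_iff bij_betw_def)
  then show "c \<in> resolvent_set S Y \<union> {s0}"
    using inj_on_shift_extend shift_surj_extend shift_in by (auto simp: resolvent_set_iff bij_betw_def)
qed

end

lemma Hol_add: "f \<in> Hol \<Longrightarrow> g \<in> Hol \<Longrightarrow> (\<lambda>z. f z + g z) \<in> Hol"
  by (auto simp: Hol_def intro!: holomorphic_intros)

lemma Hol_scale: "f \<in> Hol \<Longrightarrow> (\<lambda>z. a * f z) \<in> Hol"
  by (auto simp: Hol_def intro!: holomorphic_intros)

lemma Hol_indicator_ball: "(\<lambda>z. if z \<in> ball 0 1 then a else 0) \<in> Hol"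
proof -
  have "(\<lambda>z. if z \<in> ball 0 1 then a else 0) holomorphic_on ball 0 1"
    by (rule holomorphic_transform[of "\<lambda>_. a"]) auto
  then show ?thesis by (simp add: Hol_def)
qed

lemma wcomp_in_Hol:
  assumes "norm \<beta> \<le> 1" and m: "m holomorphic_on ball 0 1" and f: "f \<in> Hol"
  shows "wcomp m \<beta> f \<in> Hol"
proof -
  have "norm (\<beta> * z) < 1" if "norm z < 1" for z
    using mult_left_le_one_le[of "norm z" "norm \<beta>"] assms(1) that by (simp add: norm_mult)
  then have "(\<lambda>z. \<beta> * z) ` ball 0 1 \<subseteq> ball 0 1" by auto
  moreover have "f holomorphic_on ball 0 1" using f by (simp add: Hol_def)
  ultimately have "(\<lambda>z. f (\<beta> * z)) holomorphic_on ball 0 1"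
    using holomorphic_on_compose_gen[of "\<lambda>z. \<beta> * z"] by (auto simp: o_def holomorphic_intros)
  then have "(\<lambda>z. m z * f (\<beta> * z)) holomorphic_on ball 0 1"
    using m by (intro holomorphic_intros)
  then have "wcomp m \<beta> f holomorphic_on ball 0 1"
    by (rule holomorphic_transform) (simp add: wcomp_def)
  then show ?thesis by (simp add: Hol_def wcomp_def)
qed

lemma wcomp_add: "wcomp m \<beta> (\<lambda>z. f z + g z) = (\<lambda>z. wcomp m \<beta> f z + wcomp m \<beta> g z)"
  by (simp add: wcomp_def fun_eq_iff algebra_simps)

lemma wcomp_scale: "wcomp m \<beta> (\<lambda>z. a * f z) = (\<lambda>z. a * wcomp m \<beta> f z)"
  by (simp add: wcomp_def fun_eq_iff algebra_simps)

lemma wcomp_at_0: "wcomp m \<beta> f 0 = m 0 * f 0"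
  by (simp add: wcomp_def)

theorem lemma2p4:
  fixes \<beta> :: complex and m :: "complex \<Rightarrow> complex"
  assumes "norm \<beta> = 1"
    and "m holomorphic_on ball 0 1"
    and "\<exists>z\<in>ball 0 1. m z \<noteq> 0"
  shows "m 0 \<in> spectrum_op (wcomp m \<beta>) Hol \<and>
         resolvent_set (wcomp m \<beta>) Hol \<subseteq> resolvent_set (wcomp m \<beta>) Hol0 \<and>
         resolvent_set (wcomp m \<beta>) Hol0 \<subseteq> resolvent_set (wcomp m \<beta>) Hol \<union> {m 0}"
proof -
  interpret point_evaluation_eigen "wcomp m \<beta>" Hol 0 "m 0" "\<lambda>z. if z \<in> ball 0 1 then 1 else 0"
    using assms(1,2) Hol_indicator_ball
    by unfold_locales (simp_all add: Hol_add Hol_scale wcomp_in_Hol wcomp_add wcomp_scale wcomp_at_0)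
  have "Hol0 = {f \<in> Hol. f 0 = 0}" by (simp add: Hol0_def)
  then show ?thesis
    using eigenvalue_in_spectrum resolvent_set_subset_hyperplane resolvent_set_hyperplane_subset
    by (simp add: spectrum_op_def)
qed

end
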